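(* Consider the algorithm CAB described in the context under the $\gamma$-gap assumption, and let $i_t$ be the user served at round $t$. Suppose $|\boldsymbol{u}_j^\top\boldsymbol{x}-\boldsymbol{w}_{j,t-1}^\top\boldsymbol{x}|\le\mathrm{CB}_{j,t-1}(\boldsymbol{x})$ for all $j\in\mathcal U$ and all $\boldsymbol{x}\in\mathbb R^d$. Let $\boldsymbol{x}^o\in\mathbb R^d$ be fixed and suppose $\mathrm{CB}_{j,t-1}(\boldsymbol{x}^o)<\gamma/4$ for all $j\in\mathcal U$. Then $\widehat N_{i_t,t}(\boldsymbol{x}^o)=N_{i_t}(\boldsymbol{x}^o)$.
   Context: Model. Users $\mathcal U=\{1,\dots,n\}$ with unknown unit vectors $\boldsymbol{u}_i\in\mathbb R^d$; $N_i(\boldsymbol{x})=\{j:\boldsymbol{u}_j^\top\boldsymbol{x}=\boldsymbol{u}_i^\top\boldsymbol{x}\}$. $\gamma$-gap assumption ($\gamma>0$): for all $\boldsymbol{x}$ and $i,i'$, either $\boldsymbol{u}_i^\top\boldsymbol{x}=\boldsymbol{u}_{i'}^\top\boldsymbol{x}$ or $|\boldsymbol{u}_i^\top\boldsymbol{x}-\boldsymbol{u}_{i'}^\top\boldsymbol{x}|\ge\gamma$. Algorithm CAB maintains, for each user $j$, a matrix $M_{j,s}$ (starting at $I_d$) and vector $\boldsymbol{b}_{j,s}$ (starting at $\boldsymbol0$), with $\boldsymbol{w}_{j,s}=M_{j,s}^{-1}\boldsymbol{b}_{j,s}$ and $\mathrm{CB}_{j,s}(\boldsymbol{x})=\alpha(s)\sqrt{\boldsymbol{x}^\top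 M_{j,s}^{-1}\boldsymbol{x}}$ for a positive function $\alpha$. At round $t$, for any $\boldsymbol{x}$ the estimated neighborhood of the served user $i_t$ is $\widehat N_{i_t,t}(\boldsymbol{x})=\{j\in\mathcal U:|\boldsymbol{w}_{i_t,t-1}^\top\boldsymbol{x}-\boldsymbol{w}_{j,t-1}^\top\boldsymbol{x}|\le\mathrm{CB}_{i_t,t-1}(\boldsymbol{x})+\mathrm{CB}_{j,t-1}(\boldsymbol{x})\}$. *)

theory Defs
  imports "HOL-Analysis.Analysis"
begin

text \<open>State of CAB for one user j after some rounds: a history of (context, reward)
pairs used to update that user. M = I + sum x x^T, b = sum r x.\<close>

definition outer :: "real^'d \<Rightarrow> real^'d^'d" where
  "outer x = (\<chi> i k. x$i * x$k)"

definition cab_M :: "((real^'d) \<times> real) list \<Rightarrow> real^'d^'d" where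
  "cab_M h = mat 1 + sum_list (map (\<lambda>(x, r). outer x) h)"

definition cab_b :: "((real^'d) \<times> real) list \<Rightarrow> real^'d" where
  "cab_b h = sum_list (map (\<lambda>(x, r). r *\<^sub>R x) h)"

definition cab_w :: "((real^'d) \<times> real) list \<Rightarrow> real^'d" where
  "cab_w h = matrix_inv (cab_M h) *v cab_b h"

definition cab_CB :: "real \<Rightarrow> ((real^'d) \<times> real) list \<Rightarrow> real^'d \<Rightarrow> real" where
  "cab_CB a h x = a * sqrt (x \<bullet> (matrix_inv (cab_M h) *v x))"

definition true_nbhd :: "('u \<Rightarrow> real^'d) \<Rightarrow> 'u \<Rightarrow> real^'d \<Rightarrow> 'u set" where
  "true_nbhd u i x = {j. u j \<bullet> x = u i \<bullet> x}"

text \<open>Estimated neighbourhood of user i at round t, given history H s j of user j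
after s rounds and confidence parameter alpha.\<close>
definition est_nbhd ::
  "(nat \<Rightarrow> real) \<Rightarrow> (nat \<Rightarrow> 'u \<Rightarrow> ((real^'d) \<times> real) list) \<Rightarrow> nat \<Rightarrow> 'u \<Rightarrow> real^'d \<Rightarrow> 'u set" where
  "est_nbhd alpha H t i x =
     {j. \<bar>cab_w (H (t-1) i) \<bullet> x - cab_w (H (t-1) j) \<bullet> x\<bar>
          \<le> cab_CB (alpha (t-1)) (H (t-1) i) x + cab_CB (alpha (t-1)) (H (t-1) j) x}"

definition gamma_gap :: "real \<Rightarrow> ('u \<Rightarrow> real^'d) \<Rightarrow> bool" where
  "gamma_gap \<gamma> u \<longleftrightarrow> (\<forall>x i i'. u i \<bullet> x = u i' \<bullet> x \<or> \<bar>u i \<bullet> x - u i' \<bullet> x\<bar> \<ge> \<gamma>)"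

end

theory Submission
  imports Defs
begin

text \<open>If the true values differ by at least \<open>\<gamma>\<close> and both radii are below \<open>\<gamma>/4\<close>,
the estimates are more than \<open>\<gamma>/2\<close> apart while the radii sum to less than \<open>\<gamma>/2\<close>.\<close>

lemma confidence_test_iff_equal:
  fixes a b wa wb ca cb \<gamma> :: real
  assumes "\<bar>a - wa\<bar> \<le> ca" and "\<bar>b - wb\<bar> \<le> cb"
    and "ca < \<gamma> / 4" and "cb < \<gamma> / 4"
    and "a = b \<or> \<gamma> \<le> \<bar>a - b\<bar>"
  shows "\<bar>wa - wb\<bar> \<le> ca + cb \<longleftrightarrow> a = b"
  using assms by (auto simp: abs_le_iff)

theorem lemma5:
  fixes u :: "'u::finite \<Rightarrow> real^'d"
    and H :: "nat \<Rightarrow> 'u \<Rightarrow> ((real^'d) \<times> real) list"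
    and alpha :: "nat \<Rightarrow> real"
    and \<gamma> :: real and t :: nat and it :: 'u and xo :: "real^'d"
  assumes unit: "\<And>j. norm (u j) = 1"
    and alpha_pos: "\<And>s. alpha s > 0"
    and gamma_pos: "\<gamma> > 0"
    and gap: "gamma_gap \<gamma> u"
    and t1: "t \<ge> 1"
    and conf: "\<And>j x. \<bar>u j \<bullet> x - cab_w (H (t-1) j) \<bullet> x\<bar> \<le> cab_CB (alpha (t-1)) (H (t-1) j) x"
    and small: "\<And>j. cab_CB (alpha (t-1)) (H (t-1) j) xo < \<gamma> / 4"
  shows "est_nbhd alpha H t it xo = true_nbhd u it xo"
proof (rule set_eqI)
  fix j
  have "u it \<bullet> xo = u j \<bullet> xo \<or> \<gamma> \<le> \<bar>u it \<bullet> xo - u j \<bullet> xo\<bar>"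
    using gap unfolding gamma_gap_def by blast
  then have "\<bar>cab_w (H (t-1) it) \<bullet> xo - cab_w (H (t-1) j) \<bullet> xo\<bar>
      \<le> cab_CB (alpha (t-1)) (H (t-1) it) xo + cab_CB (alpha (t-1)) (H (t-1) j) xo
    \<longleftrightarrow> u it \<bullet> xo = u j \<bullet> xo"
    by (rule confidence_test_iff_equal[OF conf conf small small])
  then show "j \<in> est_nbhd alpha H t it xo \<longleftrightarrow> j \<in> true_nbhd u it xo"
    unfolding est_nbhd_def true_nbhd_def by auto
qed

end
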